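(* Let $X\subset U\subset\mathbb{R}^n$, where $U$ is open and $X$ is closed in $U$. Let $f:X\to\mathbb{R}$, let $p\in\mathbb{N}$, and suppose there is a $\mathcal{C}^p$ Whitney field $F=(F^\alpha)_{|\alpha|\le p}$ on $X$ with $F^0=f$. Then for each $i\in\mathbb{N}$, $\rho^i(\Phi_0)$ is the graph of a function $\rho^i(E_0)\to\mathbb{R}$ (i.e. for each $a\in X$ and $\xi\in\rho^i(E_0)_a$ there is exactly one $\lambda$ with $(a,\xi,\lambda)\in\rho^i(\Phi_0)$), and if $a\in X$ and $\xi\in\rho^i(E_0)_a$, then the value of this function at $\xi$ equals $\xi(T^p_aF)=\xi(F,a)$.
   Context: $\mathcal{P}_p$: real polynomials on $\mathbb{R}^n$ of degree $\le p$; $\mathcal{P}_p^*$ its dual. For $\xi\in\mathcal{P}_p^*$, $b\in\mathbb{R}^n$, $|\alpha|\le p$: $\xi_\alpha(b):=\xi(\tfrac1{\alpha!}(x-b)^\alpha)$; $\delta_a(P)=P(a)$. A bundle over $X$ with fibres in $W$ is a subset of $X\times W$ whose fibres are linear subspaces. For a bundle $E\subset X\times\mathcal{P}_p^*$: $\Delta E=\{(a,b,\xi+\eta):a,b\in X,\xi\in E_a,\eta\in E_b,|a-b|^{p-|\alpha|}|\eta_\alpha(b)|\le1\ \forall|\alpha|\le p\}$, $E'=\{(a,\xi):(a,a,\xi)\in\overline{\Delta E}\}$ (closure in $X\times X\times\mathcal{P}_p^*$), $\rho(E)=\{(a,\xi):\xi\in\operatorname{Span}E'_a\}$. For a bundle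 $\Phi\subset X\times(\mathcal{P}_p^*\times\mathbb{R})$: $\Delta\Phi=\{(a,b,\xi+\eta,\lambda+\mu):a,b\in X,(\xi,\lambda)\in\Phi_a,(\eta,\mu)\in\Phi_b,|a-b|^{p-|\alpha|}|\eta_\alpha(b)|\le1\ \forall|\alpha|\le p\}$, $\Phi'=\{(a,\xi,\lambda):(a,a,\xi,\lambda)\in\overline{\Delta\Phi}\}$, $\rho(\Phi)=\{(a,v):v\in\operatorname{Span}\Phi'_a\}$. $E_0=\{(a,\lambda\delta_a):a\in X,\lambda\in\mathbb{R}\}$, $\Phi_0=\{(a,\lambda\delta_a,\lambda f(a)):a\in X,\lambda\in\mathbb{R}\}$. For $F=(F^\alpha)_{|\alpha|\le p}$, $F^\alpha:X\to\mathbb{R}$: $T^p_aF(x)=\sum_{|\alpha|\le p}\frac1{\alpha!}F^\alpha(a)(x-a)^\alpha$, $\xi(F,a)=\xi(T^p_aF)$, and $\delta_\alpha(a,b)=\big(F^\alpha(b)-\sum_{|\beta|\le p-|\alpha|}\frac1{\beta!}F^{\alpha+\beta}(a)(b-a)^\beta\big)/|b-a|^{p-|\alpha|}$; $F$ is a $\mathcal{C}^p$ Whitney field if for every $c\in X$, $|\alpha|\le p$, $\delta_\alpha(a,b)\to0$ as $a,b\to c$ in $X$, $a\ne b$. *)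

theory Defs
  imports "HOL-Analysis.Analysis"
begin

text \<open>A polynomial of degree <= p is represented by its coefficient function
  (coefficient of the monomial x^alpha), and an element xi of the dual space
  P_p^* is represented by its values on the monomials, xi alpha = xi(x^alpha),
  with xi alpha = 0 whenever |alpha| > p.  Then xi(P) = sum of c alpha * xi alpha.\<close>

type_synonym 'n mindex = "'n \<Rightarrow> nat"
type_synonym 'n dualp = "'n mindex \<Rightarrow> real"

definition mdeg :: "'n::finite mindex \<Rightarrow> nat" where
  "mdeg \<alpha> = (\<Sum>i\<in>UNIV. \<alpha> i)"

definition Mon :: "nat \<Rightarrow> 'n::finite mindex set" where
  "Mon p = {\<alpha>. mdeg \<alpha> \<le> p}"

definition mfact :: "'n::finite mindex \<Rightarrow> real" where
  "mfact \<alpha> = (\<Prod>i\<in>UNIV. fact (\<alpha> i))"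

definition mpow :: "real^'n::finite \<Rightarrow> 'n mindex \<Rightarrow> real" where
  "mpow x \<alpha> = (\<Prod>i\<in>UNIV. (x $ i) ^ (\<alpha> i))"

definition Dual :: "nat \<Rightarrow> ('n::finite) dualp set" where
  "Dual p = {\<xi>. \<forall>\<alpha>. \<alpha> \<notin> Mon p \<longrightarrow> \<xi> \<alpha> = 0}"

definition dapp :: "nat \<Rightarrow> ('n::finite) dualp \<Rightarrow> ('n mindex \<Rightarrow> real) \<Rightarrow> real" where
  "dapp p \<xi> c = (\<Sum>\<beta>\<in>Mon p. c \<beta> * \<xi> \<beta>)"

text \<open>Coefficients of the polynomial (x-b)^alpha / alpha!.\<close>
definition shiftmon :: "real^'n::finite \<Rightarrow> 'n mindex \<Rightarrow> 'n mindex \<Rightarrow> real" where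
  "shiftmon b \<alpha> \<beta> =
     (if (\<forall>i. \<beta> i \<le> \<alpha> i)
      then (\<Prod>i\<in>UNIV. real (\<alpha> i choose \<beta> i) * (- (b $ i)) ^ (\<alpha> i - \<beta> i)) / mfact \<alpha>
      else 0)"

definition dcomp :: "nat \<Rightarrow> ('n::finite) dualp \<Rightarrow> 'n mindex \<Rightarrow> real^'n \<Rightarrow> real" where
  "dcomp p \<xi> \<alpha> b = dapp p \<xi> (shiftmon b \<alpha>)"

definition deltaP :: "nat \<Rightarrow> real^'n::finite \<Rightarrow> 'n dualp" where
  "deltaP p a = (\<lambda>\<alpha>. if \<alpha> \<in> Mon p then mpow a \<alpha> else 0)"

definition spanD :: "('n::finite) dualp set \<Rightarrow> 'n dualp set" where
  "spanD S = {v. \<exists>I c. finite I \<and> I \<subseteq> S \<and> v = (\<lambda>\<alpha>. \<Sum>u\<in>I. c u * u \<alpha>)}"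

definition spanDR :: "(('n::finite) dualp \<times> real) set \<Rightarrow> ('n dualp \<times> real) set" where
  "spanDR S = {v. \<exists>I c. finite I \<and> I \<subseteq> S \<and>
       v = ((\<lambda>\<alpha>. \<Sum>u\<in>I. c u * fst u \<alpha>), (\<Sum>u\<in>I. c u * snd u))}"

definition small :: "nat \<Rightarrow> real^'n::finite \<Rightarrow> real^'n \<Rightarrow> 'n dualp \<Rightarrow> bool" where
  "small p a b \<eta> \<longleftrightarrow> (\<forall>\<alpha>\<in>Mon p. norm (a - b) ^ (p - mdeg \<alpha>) * \<bar>dcomp p \<eta> \<alpha> b\<bar> \<le> 1)"

definition DeltaE :: "nat \<Rightarrow> (real^'n::finite) set \<Rightarrow> ((real^'n) \<times> 'n dualp) set
    \<Rightarrow> ((real^'n) \<times> (real^'n) \<times> 'n dualp) set" where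
  "DeltaE p X E = {(a, b, \<lambda>\<alpha>. \<xi> \<alpha> + \<eta> \<alpha>) | a b \<xi> \<eta>.
      a \<in> X \<and> b \<in> X \<and> (a, \<xi>) \<in> E \<and> (b, \<eta>) \<in> E \<and> small p a b \<eta>}"

definition primeE :: "nat \<Rightarrow> (real^'n::finite) set \<Rightarrow> ((real^'n) \<times> 'n dualp) set
    \<Rightarrow> ((real^'n) \<times> 'n dualp) set" where
  "primeE p X E = {(a, \<xi>). a \<in> X \<and> \<xi> \<in> Dual p \<and> (a, a, \<xi>) \<in> closure (DeltaE p X E)}"

definition rhoE :: "nat \<Rightarrow> (real^'n::finite) set \<Rightarrow> ((real^'n) \<times> 'n dualp) set
    \<Rightarrow> ((real^'n) \<times> 'n dualp) set" where
  "rhoE p X E = {(a, \<xi>). a \<in> X \<and> \<xi> \<in> spanD {\<zeta>. (a, \<zeta>) \<in> primeE p X E}}"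

definition DeltaPhi :: "nat \<Rightarrow> (real^'n::finite) set \<Rightarrow> ((real^'n) \<times> ('n dualp \<times> real)) set
    \<Rightarrow> ((real^'n) \<times> (real^'n) \<times> ('n dualp \<times> real)) set" where
  "DeltaPhi p X \<Phi> = {(a, b, (\<lambda>\<alpha>. \<xi> \<alpha> + \<eta> \<alpha>), l + m) | a b \<xi> l \<eta> m.
      a \<in> X \<and> b \<in> X \<and> (a, \<xi>, l) \<in> \<Phi> \<and> (b, \<eta>, m) \<in> \<Phi> \<and> small p a b \<eta>}"

definition primePhi :: "nat \<Rightarrow> (real^'n::finite) set \<Rightarrow> ((real^'n) \<times> ('n dualp \<times> real)) set
    \<Rightarrow> ((real^'n) \<times> ('n dualp \<times> real)) set" where
  "primePhi p X \<Phi> = {(a, \<xi>, l). a \<in> X \<and> \<xi> \<in> Dual p \<and> (a, a, \<xi>, l) \<in> closure (DeltaPhi p X \<Phi>)}"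

definition rhoPhi :: "nat \<Rightarrow> (real^'n::finite) set \<Rightarrow> ((real^'n) \<times> ('n dualp \<times> real)) set
    \<Rightarrow> ((real^'n) \<times> ('n dualp \<times> real)) set" where
  "rhoPhi p X \<Phi> = {(a, v). a \<in> X \<and> v \<in> spanDR {w. (a, w) \<in> primePhi p X \<Phi>}}"

definition E0 :: "nat \<Rightarrow> (real^'n::finite) set \<Rightarrow> ((real^'n) \<times> 'n dualp) set" where
  "E0 p X = {(a, \<lambda>\<alpha>. c * deltaP p a \<alpha>) | a c. a \<in> X}"

definition Phi0 :: "nat \<Rightarrow> (real^'n::finite) set \<Rightarrow> (real^'n \<Rightarrow> real)
    \<Rightarrow> ((real^'n) \<times> ('n dualp \<times> real)) set" where
  "Phi0 p X f = {(a, (\<lambda>\<alpha>. c * deltaP p a \<alpha>), c * f a) | a c. a \<in> X}"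

text \<open>Coefficients of the Taylor polynomial T^p_a F = sum F^alpha(a)/alpha! (x-a)^alpha.\<close>
definition taylor :: "nat \<Rightarrow> ('n::finite mindex \<Rightarrow> real^'n \<Rightarrow> real) \<Rightarrow> real^'n
    \<Rightarrow> ('n mindex \<Rightarrow> real)" where
  "taylor p F a = (\<lambda>\<beta>. \<Sum>\<alpha>\<in>Mon p. F \<alpha> a * shiftmon a \<alpha> \<beta>)"

definition whitney_rem :: "nat \<Rightarrow> ('n::finite mindex \<Rightarrow> real^'n \<Rightarrow> real) \<Rightarrow> 'n mindex
    \<Rightarrow> real^'n \<Rightarrow> real^'n \<Rightarrow> real" where
  "whitney_rem p F \<alpha> a b =
     (F \<alpha> b - (\<Sum>\<beta>\<in>Mon (p - mdeg \<alpha>). F (\<lambda>i. \<alpha> i + \<beta> i) a * mpow (b - a) \<beta> / mfact \<beta>))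
     / norm (b - a) ^ (p - mdeg \<alpha>)"

definition whitney_field :: "nat \<Rightarrow> (real^'n::finite) set \<Rightarrow> ('n mindex \<Rightarrow> real^'n \<Rightarrow> real) \<Rightarrow> bool" where
  "whitney_field p X F \<longleftrightarrow> (\<forall>c\<in>X. \<forall>\<alpha>\<in>Mon p.
     ((\<lambda>(a, b). whitney_rem p F \<alpha> a b) \<longlongrightarrow> 0)
       (at (c, c) within {(a, b). a \<in> X \<and> b \<in> X \<and> a \<noteq> b}))"

end

theory Submission
  imports Defs "HOL-Computational_Algebra.Polynomial"
begin

text \<open>Call \<Phi> the Taylor graph over E if \<Phi> = {(a, \<xi>, \<xi>(F, a)) | (a, \<xi>) \<in> E}.
  \<Phi>_0 is the Taylor graph over E_0, since \<delta>_a(T^p_a F) = F^0(a) = f(a), so it suffices that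
  \<rho> preserves this relation.  The span step does because \<xi> \<mapsto> \<xi>(F, a) is linear.  For the
  closure step, re-expanding T^p_a F around b gives
  \<eta>(F, b) - \<eta>(F, a) = \<Sum>_\<alpha> \<delta>_\<alpha>(a, b) |b - a|^(p-|\<alpha>|) \<eta>_\<alpha>(b), which the smallness
  condition on \<eta> bounds by \<Sum>_\<alpha> |\<delta>_\<alpha>(a, b)|, and this tends to 0 as a, b \<rightarrow> c by
  the Whitney condition.  With the continuity of (a, \<zeta>) \<mapsto> \<zeta>(F, a) this shows that along
  sequences in \<Delta>E tending to (c, c, \<zeta>) the values \<xi>(F, a) + \<eta>(F, b) tend to \<zeta>(F, c):
  over the diagonal, the closure of \<Delta>\<Phi> is the Taylor graph over the closure of \<Delta>E.\<close>

lemma finite_Mon: "finite (Mon p :: 'n::finite mindex set)"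
proof (rule finite_subset)
  show "Mon p \<subseteq> PiE UNIV (\<lambda>_::'n. {..p})"
  proof
    fix \<alpha> :: "'n mindex" assume "\<alpha> \<in> Mon p"
    moreover have "\<alpha> i \<le> mdeg \<alpha>" for i
      unfolding mdeg_def by (rule member_le_sum) auto
    ultimately show "\<alpha> \<in> PiE UNIV (\<lambda>_. {..p})"
      unfolding Mon_def by (auto intro: order_trans)
  qed
qed (rule finite_PiE, auto)

lemma zero_in_Mon: "(\<lambda>_. 0) \<in> Mon p"
  by (simp add: Mon_def mdeg_def)

lemma mdeg_add: "mdeg (\<lambda>i. \<alpha> i + \<beta> i) = mdeg \<alpha> + mdeg (\<beta> :: 'n::finite mindex)"
  unfolding mdeg_def by (simp add: sum.distrib)

lemma mdeg_diff:
  assumes "\<forall>i. \<alpha> i \<le> \<gamma> i"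
  shows "mdeg (\<lambda>i. \<gamma> i - \<alpha> i) = mdeg \<gamma> - mdeg (\<alpha> :: 'n::finite mindex)"
  using mdeg_add[of \<alpha> "\<lambda>i. \<gamma> i - \<alpha> i"] assms by simp

lemma Mon_downward_closed:
  assumes "\<gamma> \<in> Mon p"
  shows "{\<alpha>::'n::finite mindex. \<forall>i. \<alpha> i \<le> \<gamma> i} \<subseteq> Mon p"
  using assms unfolding Mon_def mdeg_def by (auto intro: order_trans[OF sum_mono])

lemma box_eq_PiE: "{\<alpha>::'n::finite mindex. \<forall>i. \<alpha> i \<le> \<gamma> i} = PiE UNIV (\<lambda>i. {..\<gamma> i})"
  by (auto simp: PiE_def Pi_def)

lemma mpow_zero: "mpow 0 \<beta> = (if \<beta> = (\<lambda>_. 0) then 1 else 0)"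
  by (auto simp: mpow_def fun_eq_iff intro: prod_zero)

lemma mfact_zero: "mfact (\<lambda>_. 0) = 1"
  by (simp add: mfact_def)

definition shiftmon1 :: "real \<Rightarrow> nat \<Rightarrow> nat \<Rightarrow> real" where
  "shiftmon1 t m k = (if k \<le> m then real (m choose k) * (- t) ^ (m - k) / fact m else 0)"

lemma shiftmon_eq_prod: "shiftmon b \<alpha> \<beta> = (\<Prod>i\<in>UNIV. shiftmon1 (b $ i) (\<alpha> i) (\<beta> i))"
proof (cases "\<forall>i. \<beta> i \<le> \<alpha> i")
  case True
  then show ?thesis
    unfolding shiftmon_def shiftmon1_def mfact_def by (simp add: prod_dividef)
next
  case False
  then show ?thesis
    unfolding shiftmon_def by (auto simp: shiftmon1_def intro!: prod_zero[symmetric])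
qed

lemma shiftmon1_eq_coeff: "shiftmon1 t m k = coeff ([:-t, 1:] ^ m) k / fact m"
  by (cases "k \<le> m")
     (simp_all add: shiftmon1_def coeff_linear_poly_power coeff_eq_0 degree_linear_power)

lemma shiftmon1_eval: "(\<Sum>k\<le>m. shiftmon1 t m k * x ^ k) = (x - t) ^ m / fact m"
  using binomial_ring[of x "- t" m]
  by (simp add: shiftmon1_def sum_divide_distrib mult_ac)

lemma shiftmon1_recentre:
  "shiftmon1 a g k = (\<Sum>m\<le>g. (b - a) ^ (g - m) / fact (g - m) * shiftmon1 b m k)"
proof -
  have "[:-a, 1:] ^ g = ([:-b, 1:] + [:b - a:]) ^ g" by simp
  also have "\<dots> = (\<Sum>m\<le>g. of_nat (g choose m) * [:-b, 1:] ^ m * [:b - a:] ^ (g - m))"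
    by (rule binomial_ring)
  finally have "shiftmon1 a g k
      = (\<Sum>m\<le>g. real (g choose m) * coeff ([:-b, 1:] ^ m) k * (b - a) ^ (g - m)) / fact g"
    by (simp add: shiftmon1_eq_coeff coeff_sum of_nat_poly poly_const_pow mult_ac)
  also have "\<dots> = (\<Sum>m\<le>g. (b - a) ^ (g - m) / fact (g - m) * shiftmon1 b m k)"
    unfolding sum_divide_distrib
    by (intro sum.cong refl) (simp add: shiftmon1_eq_coeff binomial_fact field_simps)
  finally show ?thesis .
qed

lemma shiftmon_recentre:
  "shiftmon a \<gamma> \<beta> = (\<Sum>\<alpha>\<in>{\<alpha>::'n::finite mindex. \<forall>i. \<alpha> i \<le> \<gamma> i}.
      mpow (b - a) (\<lambda>i. \<gamma> i - \<alpha> i) / mfact (\<lambda>i. \<gamma> i - \<alpha> i) * shiftmon b \<alpha> \<beta>)"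
proof -
  have "shiftmon a \<gamma> \<beta> = (\<Prod>i\<in>UNIV. \<Sum>m\<le>\<gamma> i.
      (b$i - a$i) ^ (\<gamma> i - m) / fact (\<gamma> i - m) * shiftmon1 (b$i) m (\<beta> i))"
    unfolding shiftmon_eq_prod by (intro prod.cong refl shiftmon1_recentre)
  also have "\<dots> = (\<Sum>\<alpha>\<in>PiE UNIV (\<lambda>i. {..\<gamma> i}). \<Prod>i\<in>UNIV.
      (b$i - a$i) ^ (\<gamma> i - \<alpha> i) / fact (\<gamma> i - \<alpha> i) * shiftmon1 (b$i) (\<alpha> i) (\<beta> i))"
    by (rule prod_sum_PiE) auto
  finally show ?thesis
    unfolding box_eq_PiE shiftmon_eq_prod mpow_def mfact_def
    by (simp add: prod_dividef prod.distrib)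
qed

lemma shiftmon_eval:
  assumes "\<alpha> \<in> Mon p"
  shows "(\<Sum>\<beta>\<in>Mon p. shiftmon a \<alpha> \<beta> * mpow x \<beta>) = mpow (x - a) (\<alpha>::'n::finite mindex) / mfact \<alpha>"
proof -
  have "(\<Sum>\<beta>\<in>Mon p. shiftmon a \<alpha> \<beta> * mpow x \<beta>)
      = (\<Sum>\<beta>\<in>{\<beta>. \<forall>i. \<beta> i \<le> \<alpha> i}. shiftmon a \<alpha> \<beta> * mpow x \<beta>)"
    using Mon_downward_closed[OF assms]
    by (intro sum.mono_neutral_right) (auto simp: finite_Mon shiftmon_def)
  also have "\<dots> = (\<Sum>\<beta>\<in>PiE UNIV (\<lambda>i. {..\<alpha> i}). \<Prod>i\<in>UNIV. shiftmon1 (a$i) (\<alpha> i) (\<beta> i) * (x$i) ^ \<beta> i)"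
    unfolding box_eq_PiE shiftmon_eq_prod mpow_def by (simp add: prod.distrib)
  also have "\<dots> = (\<Prod>i\<in>UNIV. \<Sum>k\<le>\<alpha> i. shiftmon1 (a$i) (\<alpha> i) k * (x$i) ^ k)"
    by (rule prod_sum_PiE[symmetric]) auto
  also have "\<dots> = mpow (x - a) \<alpha> / mfact \<alpha>"
    unfolding shiftmon1_eval mpow_def mfact_def by (simp add: prod_dividef)
  finally show ?thesis .
qed

definition taylor_at :: "nat \<Rightarrow> ('n::finite mindex \<Rightarrow> real^'n \<Rightarrow> real) \<Rightarrow> 'n mindex
    \<Rightarrow> real^'n \<Rightarrow> real^'n \<Rightarrow> real" where
  "taylor_at p F \<alpha> a b =
     (\<Sum>\<beta>\<in>Mon (p - mdeg \<alpha>). F (\<lambda>i. \<alpha> i + \<beta> i) a * mpow (b - a) \<beta> / mfact \<beta>)"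

lemma taylor_at_centre: "taylor_at p F \<alpha> a a = F \<alpha> a"
proof -
  have "F (\<lambda>i. \<alpha> i + \<beta> i) a * mpow (a - a) \<beta> / mfact \<beta> = (if \<beta> = (\<lambda>_. 0) then F \<alpha> a else 0)" for \<beta>
    by (auto simp: mpow_zero mfact_zero)
  then show ?thesis
    by (simp add: taylor_at_def finite_Mon zero_in_Mon)
qed

lemma whitney_rem_eq:
  "whitney_rem p F \<alpha> a b = (F \<alpha> b - taylor_at p F \<alpha> a b) / norm (b - a) ^ (p - mdeg \<alpha>)"
  unfolding whitney_rem_def taylor_at_def ..

lemma whitney_rem_diag: "whitney_rem p F \<alpha> a a = 0"
  by (simp add: whitney_rem_eq taylor_at_centre)

lemma taylor_at_add_whitney_rem:
  "F \<alpha> b = taylor_at p F \<alpha> a b + whitney_rem p F \<alpha> a b * norm (b - a) ^ (p - mdeg \<alpha>)"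
  by (cases "b = a") (simp_all add: whitney_rem_eq taylor_at_centre)

lemma dapp_add: "dapp p (\<lambda>\<alpha>. \<xi> \<alpha> + \<eta> \<alpha>) c = dapp p \<xi> c + dapp p \<eta> (c :: 'n::finite mindex \<Rightarrow> real)"
  unfolding dapp_def by (simp add: distrib_left sum.distrib)

lemma dapp_lincomb:
  "dapp p (\<lambda>\<alpha>. \<Sum>u\<in>I. r u * u \<alpha>) c = (\<Sum>u\<in>I. r u * dapp p u (c :: 'n::finite mindex \<Rightarrow> real))"
  unfolding dapp_def sum_distrib_left sum_distrib_right
  by (subst sum.swap) (simp add: mult_ac)

lemma dapp_scale: "dapp p (\<lambda>\<alpha>. r * \<xi> \<alpha>) c = r * dapp p \<xi> (c :: 'n::finite mindex \<Rightarrow> real)"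
  using dapp_lincomb[of p "\<lambda>_. r" "{\<xi>}" c] by simp

lemma dapp_taylor: "dapp p \<eta> (taylor p F b) = (\<Sum>\<alpha>\<in>Mon p. F \<alpha> b * dcomp p \<eta> \<alpha> (b :: real^'n::finite))"
  unfolding dapp_def taylor_def dcomp_def sum_distrib_right sum_distrib_left
  by (subst sum.swap) (simp add: mult_ac)

lemma dapp_deltaP_taylor: "dapp p (deltaP p a) (taylor p F a) = F (\<lambda>_. 0) (a :: real^'n::finite)"
proof -
  have "dapp p (deltaP p a) (taylor p F a) = (\<Sum>\<alpha>\<in>Mon p. F \<alpha> a * (\<Sum>\<beta>\<in>Mon p. shiftmon a \<alpha> \<beta> * mpow a \<beta>))"
    unfolding dapp_def taylor_def deltaP_def sum_distrib_right sum_distrib_left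
    by (subst sum.swap) (simp add: mult_ac)
  also have "\<dots> = (\<Sum>\<alpha>\<in>Mon p. if \<alpha> = (\<lambda>_::'n. 0) then F (\<lambda>_. 0) a else 0)"
    by (intro sum.cong refl) (auto simp: shiftmon_eval mpow_zero mfact_zero)
  finally show ?thesis
    by (simp add: finite_Mon zero_in_Mon)
qed

lemma dapp_taylor_recentre:
  "dapp p \<eta> (taylor p F a) = (\<Sum>\<alpha>\<in>Mon p. taylor_at p F \<alpha> a b * dcomp p \<eta> \<alpha> (b :: real^'n::finite))"
proof -
  let ?c = "\<lambda>\<gamma> \<alpha>::'n mindex. mpow (b - a) (\<lambda>i. \<gamma> i - \<alpha> i) / mfact (\<lambda>i. \<gamma> i - \<alpha> i)"
  have "dapp p \<eta> (taylor p F a)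
      = (\<Sum>\<gamma>\<in>Mon p. \<Sum>\<alpha>\<in>{\<alpha>\<in>Mon p. \<forall>i. \<alpha> i \<le> \<gamma> i}. F \<gamma> a * ?c \<gamma> \<alpha> * dcomp p \<eta> \<alpha> b)"
  proof (unfold dapp_taylor[of p \<eta> F a], intro sum.cong refl)
    fix \<gamma> :: "'n mindex" assume "\<gamma> \<in> Mon p"
    then have "{\<alpha>\<in>Mon p. \<forall>i. \<alpha> i \<le> \<gamma> i} = {\<alpha>. \<forall>i. \<alpha> i \<le> \<gamma> i}"
      using Mon_downward_closed by auto
    moreover have "dcomp p \<eta> \<gamma> a = (\<Sum>\<alpha>\<in>{\<alpha>. \<forall>i. \<alpha> i \<le> \<gamma> i}. ?c \<gamma> \<alpha> * dcomp p \<eta> \<alpha> b)"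
      unfolding dapp_def dcomp_def shiftmon_recentre[of a \<gamma> _ b] sum_distrib_right sum_distrib_left
      by (subst sum.swap) (simp add: mult_ac)
    ultimately show "F \<gamma> a * dcomp p \<eta> \<gamma> a
        = (\<Sum>\<alpha>\<in>{\<alpha>\<in>Mon p. \<forall>i. \<alpha> i \<le> \<gamma> i}. F \<gamma> a * ?c \<gamma> \<alpha> * dcomp p \<eta> \<alpha> b)"
      by (simp only: sum_distrib_left mult.assoc)
  qed
  also have "\<dots> = (\<Sum>\<alpha>\<in>Mon p. (\<Sum>\<gamma>\<in>{\<gamma>\<in>Mon p. \<forall>i. \<alpha> i \<le> \<gamma> i}. F \<gamma> a * ?c \<gamma> \<alpha>) * dcomp p \<eta> \<alpha> b)"
    unfolding sum_distrib_right by (rule sum.swap_restrict[OF finite_Mon finite_Mon])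
  also have "\<dots> = (\<Sum>\<alpha>\<in>Mon p. taylor_at p F \<alpha> a b * dcomp p \<eta> \<alpha> b)"
  proof (intro sum.cong refl arg_cong2[where f = "(*)"])
    fix \<alpha> :: "'n mindex" assume "\<alpha> \<in> Mon p"
    then show "(\<Sum>\<gamma>\<in>{\<gamma>\<in>Mon p. \<forall>i. \<alpha> i \<le> \<gamma> i}. F \<gamma> a * ?c \<gamma> \<alpha>) = taylor_at p F \<alpha> a b"
      unfolding taylor_at_def
      by (intro sum.reindex_bij_witness[where j = "\<lambda>\<gamma> i. \<gamma> i - \<alpha> i" and i = "\<lambda>\<beta> i. \<alpha> i + \<beta> i"])
         (auto simp: Mon_def mdeg_add mdeg_diff)
  qed
  finally show ?thesis .
qed

lemma dapp_taylor_diff: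
  "dapp p \<eta> (taylor p F b) - dapp p \<eta> (taylor p F a)
   = (\<Sum>\<alpha>\<in>Mon p. whitney_rem p F \<alpha> a b * norm (b - a) ^ (p - mdeg \<alpha>) * dcomp p \<eta> \<alpha> (b :: real^'n::finite))"
  unfolding dapp_taylor_recentre[of p \<eta> F a b] dapp_taylor[of p \<eta> F b] sum_subtractf[symmetric]
  by (intro sum.cong refl) (subst taylor_at_add_whitney_rem[of F _ b p a], simp add: algebra_simps)

lemma dapp_taylor_diff_bound:
  assumes "small p a b \<eta>"
  shows "\<bar>dapp p \<eta> (taylor p F b) - dapp p \<eta> (taylor p F a)\<bar>
    \<le> (\<Sum>\<alpha>\<in>Mon p. \<bar>whitney_rem p F \<alpha> a (b :: real^'n::finite)\<bar>)"
  unfolding dapp_taylor_diff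
proof (rule order_trans[OF sum_abs sum_mono])
  fix \<alpha> :: "'n mindex" assume "\<alpha> \<in> Mon p"
  then have "norm (b - a) ^ (p - mdeg \<alpha>) * \<bar>dcomp p \<eta> \<alpha> b\<bar> \<le> 1"
    using assms unfolding small_def by (simp add: norm_minus_commute)
  then have "\<bar>whitney_rem p F \<alpha> a b\<bar> * (norm (b - a) ^ (p - mdeg \<alpha>) * \<bar>dcomp p \<eta> \<alpha> b\<bar>)
      \<le> \<bar>whitney_rem p F \<alpha> a b\<bar>"
    by (simp add: mult_left_le)
  then show "\<bar>whitney_rem p F \<alpha> a b * norm (b - a) ^ (p - mdeg \<alpha>) * dcomp p \<eta> \<alpha> b\<bar>
      \<le> \<bar>whitney_rem p F \<alpha> a b\<bar>"
    by (simp add: abs_mult mult_ac)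
qed

lemma spanDR_graph:
  fixes g :: "'n::finite dualp \<Rightarrow> real"
  assumes linear: "\<And>I r. finite I \<Longrightarrow> g (\<lambda>\<alpha>. \<Sum>u\<in>I. r u * u \<alpha>) = (\<Sum>u\<in>I. r u * g u)"
  shows "spanDR ((\<lambda>\<xi>. (\<xi>, g \<xi>)) ` S) = (\<lambda>v. (v, g v)) ` spanD S"
proof (intro set_eqI iffI)
  let ?h = "\<lambda>\<xi>. (\<xi>, g \<xi>)"
  have inj: "inj_on ?h J" for J
    by (rule inj_onI) simp
  have lincomb: "((\<lambda>\<alpha>. \<Sum>u\<in>?h ` J. c u * fst u \<alpha>), \<Sum>u\<in>?h ` J. c u * snd u)
      = ?h (\<lambda>\<alpha>. \<Sum>\<xi>\<in>J. c (?h \<xi>) * \<xi> \<alpha>)" if "finite J" for J c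
    using that by (simp add: sum.reindex[OF inj] linear)
  fix x
  show "x \<in> spanDR (?h ` S)" if "x \<in> ?h ` spanD S"
  proof -
    from that obtain J r where "finite J" "J \<subseteq> S" "x = ?h (\<lambda>\<alpha>. \<Sum>\<xi>\<in>J. r \<xi> * \<xi> \<alpha>)"
      unfolding spanD_def by blast
    with lincomb[of J "\<lambda>u. r (fst u)"] show ?thesis
      unfolding spanDR_def by (intro CollectI exI[of _ "?h ` J"] exI[of _ "\<lambda>u. r (fst u)"]) auto
  qed
  show "x \<in> ?h ` spanD S" if "x \<in> spanDR (?h ` S)"
  proof -
    from that obtain I c where I: "finite I" "I \<subseteq> ?h ` S"
        and x: "x = ((\<lambda>\<alpha>. \<Sum>u\<in>I. c u * fst u \<alpha>), \<Sum>u\<in>I. c u * snd u)"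
      unfolding spanDR_def by blast
    from I(2) obtain J where J: "J \<subseteq> S" "I = ?h ` J"
      unfolding subset_image_iff by blast
    with I(1) have "finite J"
      using finite_imageD[OF _ inj] by blast
    have "(\<lambda>\<alpha>. \<Sum>\<xi>\<in>J. c (?h \<xi>) * \<xi> \<alpha>) \<in> spanD S"
      unfolding spanD_def using \<open>finite J\<close> J(1)
      by (intro CollectI exI[of _ J] exI[of _ "\<lambda>\<xi>. c (?h \<xi>)"]) simp
    with lincomb[OF \<open>finite J\<close>] x J(2) show ?thesis
      by simp
  qed
qed

lemma tendsto_fun_apply:
  fixes Z :: "'a \<Rightarrow> ('b::countable \<Rightarrow> real)"
  assumes "(Z \<longlongrightarrow> \<xi>) F"
  shows "((\<lambda>k. Z k \<beta>) \<longlongrightarrow> \<xi> \<beta>) F"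
  using continuous_on_tendsto_compose[OF continuous_on_product_coordinates assms]
  by (simp add: o_def)

lemma tendsto_mpow: "(f \<longlongrightarrow> x) F \<Longrightarrow> ((\<lambda>k. mpow (f k) \<beta>) \<longlongrightarrow> mpow x \<beta>) F"
  unfolding mpow_def by (intro tendsto_prod tendsto_power tendsto_vec_nth)

lemma tendsto_shiftmon: "(f \<longlongrightarrow> x) F \<Longrightarrow> ((\<lambda>k. shiftmon (f k) \<alpha> \<beta>) \<longlongrightarrow> shiftmon x \<alpha> \<beta>) F"
  unfolding shiftmon_eq_prod shiftmon1_def
  by (intro tendsto_prod) (auto intro!: tendsto_intros)

lemma tendsto_Pair_iff: "((\<lambda>x. (f x, g x)) \<longlongrightarrow> (a, b)) F \<longleftrightarrow> (f \<longlongrightarrow> a) F \<and> (g \<longlongrightarrow> b) F"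
proof
  assume "((\<lambda>x. (f x, g x)) \<longlongrightarrow> (a, b)) F"
  from tendsto_fst[OF this] tendsto_snd[OF this] show "(f \<longlongrightarrow> a) F \<and> (g \<longlongrightarrow> b) F"
    by simp
qed (auto intro: tendsto_Pair)

lemma closure_image_sequentially:
  fixes f :: "'a \<Rightarrow> 'b::first_countable_topology"
  shows "x \<in> closure (f ` S) \<longleftrightarrow> (\<exists>w. (\<forall>k. w k \<in> S) \<and> (\<lambda>k. f (w k)) \<longlonglongrightarrow> x)"
proof
  assume "x \<in> closure (f ` S)"
  then obtain s where s: "\<forall>k. s k \<in> f ` S" "s \<longlonglongrightarrow> x"
    unfolding closure_sequential by blast
  from s(1) have "\<forall>k. \<exists>y. y \<in> S \<and> s k = f y"
    by blast
  then obtain w where w: "\<forall>k. w k \<in> S \<and> s k = f (w k)"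
    by (auto dest!: choice)
  then have "s = (\<lambda>k. f (w k))"
    by auto
  with w s(2) show "\<exists>w. (\<forall>k. w k \<in> S) \<and> (\<lambda>k. f (w k)) \<longlonglongrightarrow> x"
    by blast
next
  assume "\<exists>w. (\<forall>k. w k \<in> S) \<and> (\<lambda>k. f (w k)) \<longlonglongrightarrow> x"
  then obtain w where "\<forall>k. w k \<in> S" "(\<lambda>k. f (w k)) \<longlonglongrightarrow> x"
    by blast
  then show "x \<in> closure (f ` S)"
    unfolding closure_sequential by (intro exI[of _ "\<lambda>k. f (w k)"]) auto
qed

lemma ex_fun_prod4_iff:
  "(\<exists>w. P w) \<longleftrightarrow> (\<exists>A B C D. P (\<lambda>k. (A k, B k, C k, D k)))"
proof
  assume "\<exists>w. P w"
  then obtain w where "P w" ..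
  then show "\<exists>A B C D. P (\<lambda>k. (A k, B k, C k, D k))"
    by (intro exI[of _ "\<lambda>k. fst (w k)"] exI[of _ "\<lambda>k. fst (snd (w k))"]
        exI[of _ "\<lambda>k. fst (snd (snd (w k)))"] exI[of _ "\<lambda>k. snd (snd (snd (w k)))"]) simp
qed blast

definition taylor_graph :: "nat \<Rightarrow> ('n::finite mindex \<Rightarrow> real^'n \<Rightarrow> real)
    \<Rightarrow> ((real^'n) \<times> 'n dualp) set \<Rightarrow> ((real^'n) \<times> ('n dualp \<times> real)) set" where
  "taylor_graph p F E = {(a, \<xi>, dapp p \<xi> (taylor p F a)) | a \<xi>. (a, \<xi>) \<in> E}"

lemma mem_taylor_graph:
  "(a, \<xi>, l) \<in> taylor_graph p F E \<longleftrightarrow> (a, \<xi>) \<in> E \<and> l = dapp p \<xi> (taylor p F a)"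
  unfolding taylor_graph_def by blast

definition DeltaE_witnesses :: "nat \<Rightarrow> (real^'n::finite) set \<Rightarrow> ((real^'n) \<times> 'n dualp) set
    \<Rightarrow> ((real^'n) \<times> (real^'n) \<times> 'n dualp \<times> 'n dualp) set" where
  "DeltaE_witnesses p X E = {(a, b, \<xi>, \<eta>). a \<in> X \<and> b \<in> X \<and> (a, \<xi>) \<in> E \<and> (b, \<eta>) \<in> E \<and> small p a b \<eta>}"

lemma DeltaE_eq_image:
  "DeltaE p X E = (\<lambda>(a, b, \<xi>, \<eta>). (a, b, \<lambda>\<alpha>. \<xi> \<alpha> + \<eta> \<alpha>)) ` DeltaE_witnesses p X E"
  unfolding DeltaE_def DeltaE_witnesses_def by (auto simp: image_iff) blast+

lemma DeltaPhi_taylor_graph_eq_image: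
  "DeltaPhi p X (taylor_graph p F E) = (\<lambda>(a, b, \<xi>, \<eta>). (a, b, \<lambda>\<alpha>. \<xi> \<alpha> + \<eta> \<alpha>,
      dapp p \<xi> (taylor p F a) + dapp p \<eta> (taylor p F b))) ` DeltaE_witnesses p X E"
  unfolding DeltaPhi_def taylor_graph_def DeltaE_witnesses_def by (auto simp: image_iff) blast+

lemma Phi0_eq_taylor_graph:
  assumes "\<forall>x\<in>X. F (\<lambda>_. 0) x = f x"
  shows "Phi0 p X f = taylor_graph p F (E0 p X)"
  unfolding Phi0_def E0_def taylor_graph_def using assms
  by (auto simp: dapp_scale dapp_deltaP_taylor)

context
  fixes p :: nat and X :: "(real^'n::finite) set" and F :: "'n mindex \<Rightarrow> real^'n \<Rightarrow> real"
  assumes whitney: "whitney_field p X F"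
begin

text \<open>The Whitney condition only concerns pairs a \<noteq> b; the remainder vanishes on the
  diagonal, so the limit holds over all of X \<times> X.\<close>
lemma whitney_rem_tendsto:
  assumes "c \<in> X" and "\<alpha> \<in> Mon p"
  shows "((\<lambda>(a, b). whitney_rem p F \<alpha> a b) \<longlongrightarrow> 0) (at (c, c) within X \<times> X)"
proof -
  have off_diagonal: "((\<lambda>(a, b). whitney_rem p F \<alpha> a b) \<longlongrightarrow> 0)
      (at (c, c) within {(a, b). a \<in> X \<and> b \<in> X \<and> a \<noteq> b})"
    using whitney assms unfolding whitney_field_def by blast
  have diagonal: "((\<lambda>(a, b). whitney_rem p F \<alpha> a b) \<longlongrightarrow> 0)
      (at (c, c) within {(a, b). a \<in> X \<and> b \<in> X \<and> a = b})"
    by (rule tendsto_eventually, unfold eventually_at_filter, rule always_eventually)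
       (auto simp: whitney_rem_diag)
  have "X \<times> X = {(a, b). a \<in> X \<and> b \<in> X \<and> a \<noteq> b} \<union> {(a, b). a \<in> X \<and> b \<in> X \<and> a = b}"
    by auto
  with Lim_Un[OF off_diagonal diagonal] show ?thesis
    by simp
qed

lemma whitney_rem_tendsto_sequentially:
  assumes "c \<in> X" and "\<alpha> \<in> Mon p" and "\<And>k. A k \<in> X" and "\<And>k. B k \<in> X"
    and "A \<longlonglongrightarrow> c" and "B \<longlonglongrightarrow> c"
  shows "(\<lambda>k. whitney_rem p F \<alpha> (A k) (B k)) \<longlonglongrightarrow> 0"
proof -
  have "continuous (at (c, c) within X \<times> X) (\<lambda>(a, b). whitney_rem p F \<alpha> a b)"
    using whitney_rem_tendsto[OF assms(1,2)] by (simp add: continuous_within whitney_rem_diag)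
  from continuous_within_tendsto_compose'[OF this _ tendsto_Pair[OF assms(5,6)]] assms(3,4)
  show ?thesis
    by (simp add: whitney_rem_diag)
qed

lemma tendsto_whitney_field:
  assumes "c \<in> X" and "\<alpha> \<in> Mon p" and "\<And>k. A k \<in> X" and "A \<longlonglongrightarrow> c"
  shows "(\<lambda>k. F \<alpha> (A k)) \<longlonglongrightarrow> F \<alpha> c"
proof -
  have "(\<lambda>k. taylor_at p F \<alpha> c (A k)) \<longlonglongrightarrow> taylor_at p F \<alpha> c c"
    unfolding taylor_at_def by (intro tendsto_intros tendsto_mpow assms(4)) (simp add: mfact_def)
  moreover have "(\<lambda>k. whitney_rem p F \<alpha> c (A k) * norm (A k - c) ^ (p - mdeg \<alpha>)) \<longlonglongrightarrow> 0"
    using tendsto_mult[OF whitney_rem_tendsto_sequentially[OF assms(1,2) _ assms(3) _ assms(4)]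
        tendsto_power[OF tendsto_norm[OF tendsto_diff[OF assms(4) tendsto_const]]]] assms(1)
    by simp
  ultimately have "(\<lambda>k. taylor_at p F \<alpha> c (A k) + whitney_rem p F \<alpha> c (A k) * norm (A k - c) ^ (p - mdeg \<alpha>))
      \<longlonglongrightarrow> F \<alpha> c"
    using tendsto_add[where b = 0] by (simp add: taylor_at_centre)
  then show ?thesis
    by (simp flip: taylor_at_add_whitney_rem)
qed

lemma tendsto_dapp_taylor:
  assumes "c \<in> X" and "\<And>k. A k \<in> X" and "A \<longlonglongrightarrow> c" and "Z \<longlonglongrightarrow> \<xi>"
  shows "(\<lambda>k. dapp p (Z k) (taylor p F (A k))) \<longlonglongrightarrow> dapp p \<xi> (taylor p F c)"
  unfolding dapp_def taylor_def
  by (intro tendsto_sum tendsto_mult tendsto_fun_apply[OF assms(4)]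
      tendsto_whitney_field[OF assms(1) _ assms(2,3)] tendsto_shiftmon[OF assms(3)] tendsto_const)

lemma tendsto_dapp_taylor_DeltaE:
  assumes "c \<in> X" and "\<And>k. A k \<in> X" and "\<And>k. B k \<in> X" and "A \<longlonglongrightarrow> c" and "B \<longlonglongrightarrow> c"
    and "(\<lambda>k. \<lambda>\<alpha>. Xi k \<alpha> + Eta k \<alpha>) \<longlonglongrightarrow> \<xi>" and "\<And>k. small p (A k) (B k) (Eta k)"
  shows "(\<lambda>k. dapp p (Xi k) (taylor p F (A k)) + dapp p (Eta k) (taylor p F (B k)))
           \<longlonglongrightarrow> dapp p \<xi> (taylor p F c)"
proof -
  have rem_sum: "(\<lambda>k. \<Sum>\<alpha>\<in>Mon p. \<bar>whitney_rem p F \<alpha> (A k) (B k)\<bar>) \<longlonglongrightarrow> 0"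
    by (intro tendsto_null_sum tendsto_rabs_zero whitney_rem_tendsto_sequentially[OF assms(1) _ assms(2-5)])
  have bound: "\<forall>k. norm (dapp p (Eta k) (taylor p F (B k)) - dapp p (Eta k) (taylor p F (A k)))
      \<le> (\<Sum>\<alpha>\<in>Mon p. \<bar>whitney_rem p F \<alpha> (A k) (B k)\<bar>)"
    using dapp_taylor_diff_bound[OF assms(7)] by simp
  have diff: "(\<lambda>k. dapp p (Eta k) (taylor p F (B k)) - dapp p (Eta k) (taylor p F (A k))) \<longlonglongrightarrow> 0"
    by (rule Lim_null_comparison[OF always_eventually[OF bound] rem_sum])
  from tendsto_add[OF tendsto_dapp_taylor[OF assms(1,2,4,6)] diff] show ?thesis
    by (simp add: dapp_add)
qed

lemma closure_DeltaPhi_taylor_graph: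
  assumes "a \<in> X"
  shows "(a, a, \<xi>, l) \<in> closure (DeltaPhi p X (taylor_graph p F E))
     \<longleftrightarrow> (a, a, \<xi>) \<in> closure (DeltaE p X E) \<and> l = dapp p \<xi> (taylor p F a)"
proof -
  have lim: "(\<lambda>k. dapp p (Xi k) (taylor p F (A k)) + dapp p (Eta k) (taylor p F (B k)))
      \<longlonglongrightarrow> dapp p \<xi> (taylor p F a)"
    if "\<forall>k. (A k, B k, Xi k, Eta k) \<in> DeltaE_witnesses p X E" and "A \<longlonglongrightarrow> a" and "B \<longlonglongrightarrow> a"
      and "(\<lambda>k. \<lambda>\<alpha>. Xi k \<alpha> + Eta k \<alpha>) \<longlonglongrightarrow> \<xi>" for A B Xi Eta
    using that by (intro tendsto_dapp_taylor_DeltaE[OF assms]) (auto simp: DeltaE_witnesses_def)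
  show ?thesis
    unfolding DeltaPhi_taylor_graph_eq_image DeltaE_eq_image closure_image_sequentially
      ex_fun_prod4_iff
    by (auto simp: tendsto_Pair_iff dest: lim LIMSEQ_unique) (blast intro: lim)
qed

lemma primePhi_taylor_graph: "primePhi p X (taylor_graph p F E) = taylor_graph p F (primeE p X E)"
  by (auto simp: primePhi_def primeE_def mem_taylor_graph closure_DeltaPhi_taylor_graph)

lemma rhoPhi_taylor_graph: "rhoPhi p X (taylor_graph p F E) = taylor_graph p F (rhoE p X E)"
proof -
  have "{v. (a, v) \<in> primePhi p X (taylor_graph p F E)}
      = (\<lambda>\<xi>. (\<xi>, dapp p \<xi> (taylor p F a))) ` {\<xi>. (a, \<xi>) \<in> primeE p X E}" for a
    by (auto simp: primePhi_taylor_graph mem_taylor_graph)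
  then have "spanDR {v. (a, v) \<in> primePhi p X (taylor_graph p F E)}
      = (\<lambda>\<xi>. (\<xi>, dapp p \<xi> (taylor p F a))) ` spanD {\<xi>. (a, \<xi>) \<in> primeE p X E}" for a
    by (simp add: spanDR_graph[of "\<lambda>\<xi>. dapp p \<xi> (taylor p F a)", OF dapp_lincomb])
  then show ?thesis
    by (auto simp: rhoPhi_def rhoE_def mem_taylor_graph)
qed

lemma funpow_rhoPhi_taylor_graph:
  "(rhoPhi p X ^^ i) (taylor_graph p F E) = taylor_graph p F ((rhoE p X ^^ i) E)"
  by (induction i) (simp_all add: rhoPhi_taylor_graph)

end

theorem lemma4p17:
  fixes X U :: "(real^'n::finite) set" and f :: "real^'n \<Rightarrow> real" and p :: nat
    and F :: "'n mindex \<Rightarrow> real^'n \<Rightarrow> real"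
  assumes "open U" and "X \<subseteq> U" and "closedin (top_of_set U) X"
    and "whitney_field p X F" and "\<forall>x\<in>X. F (\<lambda>_. 0) x = f x"
  shows "(\<forall>a \<xi> t. (a, \<xi>, t) \<in> (rhoPhi p X ^^ i) (Phi0 p X f) \<longrightarrow> (a, \<xi>) \<in> (rhoE p X ^^ i) (E0 p X))
       \<and> (\<forall>a\<in>X. \<forall>\<xi>. (a, \<xi>) \<in> (rhoE p X ^^ i) (E0 p X) \<longrightarrow>
            (\<exists>!t. (a, \<xi>, t) \<in> (rhoPhi p X ^^ i) (Phi0 p X f))
          \<and> (a, \<xi>, dapp p \<xi> (taylor p F a)) \<in> (rhoPhi p X ^^ i) (Phi0 p X f))"
proof -
  have "Phi0 p X f = taylor_graph p F (E0 p X)"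
    by (rule Phi0_eq_taylor_graph) (rule assms(5))
  then have "(rhoPhi p X ^^ i) (Phi0 p X f) = taylor_graph p F ((rhoE p X ^^ i) (E0 p X))"
    by (simp add: funpow_rhoPhi_taylor_graph[OF assms(4)])
  then show ?thesis
    by (auto simp: mem_taylor_graph)
qed

end
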